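(* Let $K$ be an infinite commutative domain of characteristic $p>0$ and let $R$ be an associative (not necessarily unital) $K$-algebra on which $K$ acts torsion-freely. Then the following are equivalent. (i) $(R,\cdot)$ satisfies a semigroup identity; (ii) $R$ satisfies a binomial identity; (iii) there exist $n\ge0$ and $\alpha_0,\dots,\alpha_n\in K$, not all zero, such that $\sum_{i=0}^n\alpha_i y^ixy^{n-i}=0$ for all $x,y\in R$; (iv) there exists $m\ge1$ such that $y^m e_m y^m=0$ for all $x,y\in R$.
   Context: A semigroup identity is $u=v$ where $u\ne v$ are words in the free semigroup on variables $x,y,x_3,\dots$, holding under all substitutions. A binomial identity is a nontrivial polynomial identity $\alpha_1u_1+\alpha_2u_2=0$ with $u_1,u_2$ monomials and $\alpha_1,\alpha_2\in K$. $[a,b]=ab-ba$, $e_1=[x,y]$, $e_{m+1}=[e_m,y]$. *)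

theory Defs
  imports Main "HOL.Modules"
begin

definition k_algebra :: "('k::comm_ring_1 \<Rightarrow> 'r::ring \<Rightarrow> 'r) \<Rightarrow> bool" where
  "k_algebra sc \<longleftrightarrow> module sc \<and>
     (\<forall>a x y. sc a (x * y) = sc a x * y \<and> sc a (x * y) = x * sc a y)"

definition torsion_free_action :: "('k::zero \<Rightarrow> 'r::zero \<Rightarrow> 'r) \<Rightarrow> bool" where
  "torsion_free_action sc \<longleftrightarrow> (\<forall>a x. sc a x = 0 \<longrightarrow> a = 0 \<or> x = 0)"

text \<open>Words of the free semigroup on variables x_0, x_1, ... are nonempty lists of
  variable indices; evaluation under a substitution f.\<close>
fun weval :: "(nat \<Rightarrow> 'r::times) \<Rightarrow> nat list \<Rightarrow> 'r" where
  "weval f [] = undefined"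
| "weval f [i] = f i"
| "weval f (i # j # w) = f i * weval f (j # w)"

definition satisfies_semigroup_identity :: "'r::times itself \<Rightarrow> bool" where
  "satisfies_semigroup_identity _ \<longleftrightarrow>
     (\<exists>u v. u \<noteq> [] \<and> v \<noteq> [] \<and> u \<noteq> v \<and>
        (\<forall>f :: nat \<Rightarrow> 'r. weval f u = weval f v))"

text \<open>Binomial identity a1 u1 + a2 u2 = 0, nontrivial as an element of the free
  (non-unital) associative K-algebra.\<close>
definition satisfies_binomial_identity ::
    "('k::comm_ring_1 \<Rightarrow> 'r::ring \<Rightarrow> 'r) \<Rightarrow> bool" where
  "satisfies_binomial_identity sc \<longleftrightarrow>
     (\<exists>a1 a2 u1 u2. u1 \<noteq> [] \<and> u2 \<noteq> [] \<and>
        (if u1 = u2 then a1 + a2 \<noteq> 0 else a1 \<noteq> 0 \<or> a2 \<noteq> 0) \<and>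
        (\<forall>f :: nat \<Rightarrow> 'r. sc a1 (weval f u1) + sc a2 (weval f u2) = 0))"

text \<open>lpow y i z = y^i z and rpow y i z = z y^i (with y^0 z = z, no unit needed).\<close>
definition lpow :: "'r::times \<Rightarrow> nat \<Rightarrow> 'r \<Rightarrow> 'r" where
  "lpow y i z = ((\<lambda>w. y * w) ^^ i) z"

definition rpow :: "'r::times \<Rightarrow> nat \<Rightarrow> 'r \<Rightarrow> 'r" where
  "rpow y i z = ((\<lambda>w. w * y) ^^ i) z"

definition comm :: "'r::ring \<Rightarrow> 'r \<Rightarrow> 'r" where
  "comm a b = a * b - b * a"

text \<open>e_m = [...[[x,y],y],...,y] (m brackets); ecomm x y 1 = [x,y].\<close>
definition ecomm :: "'r::ring \<Rightarrow> 'r \<Rightarrow> nat \<Rightarrow> 'r" where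
  "ecomm x y m = ((\<lambda>z. comm z y) ^^ m) x"

end

(*
  For fixed y, left and right multiplication by y commute with each other and with the
  scalars, so R is a module over K[S,T] with S acting as x \<mapsto> y x and T as x \<mapsto> x y. The
  polynomials acting as zero for every y form an ideal Ann of K[S,T]; (iii) says that Ann
  contains a nonzero homogeneous polynomial and (iv) that it contains S^m T^m (T - S)^m.

  Replacing y by \<mu> y and using that K is infinite and R torsion-free, every homogeneous
  component of an element of Ann lies in Ann. A binomial identity produces a nonzero element
  of Ann: substitute y + \<lambda> x for one variable, y for the others, and take the coefficient
  of \<lambda>. For (iii) \<Rightarrow> (iv), the dehomogenized components B_k(S, 1) of the elements of Ann
  form an ideal of K[S]; an element d of minimal degree divides all of them up to scalars, so
  its roots in an algebraic closure are common roots. A common root other than 0 and 1 is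
  impossible: substituting y + l y^2 for y would give infinitely many roots of one nonzero
  polynomial. Hence d = c S^a (S - 1)^b, and homogenizing gives T^r S^a (S - T)^b in Ann.
  Finally, in characteristic p and for q = p^m \<ge> m we have (T - S)^q = T^q - S^q, so
  y^q x y^(2q) = y^(2q) x y^q, which is a semigroup identity.
*)
theory Submission
  imports Defs "HOL-Algebra.Algebraic_Closure_Type"
begin

section \<open>Bivariate polynomials\<close>

(* K[S,T] is represented as K[S][T]: a polynomial in T with coefficients in K[S]. *)

definition varS :: "'a::comm_semiring_1 poly poly" where
  "varS = [:[:0, 1:]:]"

definition varT :: "'a::comm_semiring_1 poly poly" where
  "varT = [:0, 1:]"

(* homog n h = T^n h(S/T) *)
definition homog :: "nat \<Rightarrow> 'a::comm_semiring_1 poly \<Rightarrow> 'a poly poly" where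
  "homog n h = (\<Sum>i\<le>n. monom (monom (coeff h i) i) (n - i))"

(* dehom k B = B_k(S, 1), where B_k is the component of total degree k of B *)
definition dehom :: "nat \<Rightarrow> 'a::comm_semiring_1 poly poly \<Rightarrow> 'a poly" where
  "dehom k B = (\<Sum>i\<le>k. monom (coeff (coeff B (k - i)) i) i)"

(* subst_ST \<phi> B = B(\<phi>(S), \<phi>(T)) *)
definition subst_ST :: "'a::comm_semiring_1 poly \<Rightarrow> 'a poly poly \<Rightarrow> 'a poly poly" where
  "subst_ST \<phi> B = pcompose (map_poly (\<lambda>g. pcompose g \<phi>) B) (map_poly (\<lambda>c. [:c:]) \<phi>)"

lemma coeff_coeff_homog:
  "coeff (coeff (homog n h) j) i = (if i + j = n then coeff h i else 0)"
proof -
  have "coeff (coeff (homog n h) j) i =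
      (\<Sum>i'\<le>n. if i' = i then (if n - i' = j then coeff h i' else 0) else 0)"
    unfolding homog_def coeff_sum by (intro sum.cong) (auto simp: coeff_monom)
  also have "\<dots> = (if i + j = n then coeff h i else 0)"
    by (simp add: sum.delta) linarith
  finally show ?thesis .
qed

lemma coeff_dehom: "coeff (dehom k B) i = (if i \<le> k then coeff (coeff B (k - i)) i else 0)"
  by (simp add: dehom_def coeff_sum coeff_monom)

lemma degree_dehom: "degree (dehom k B) \<le> k"
  by (rule degree_le) (simp add: coeff_dehom)

lemma dehom_homog: "degree h \<le> k \<Longrightarrow> dehom k (homog k h) = h"
  by (rule poly_eqI) (auto simp: coeff_dehom coeff_coeff_homog coeff_eq_0)

lemma homog_diff: "homog k (p - q) = homog k p - homog k (q :: 'a::comm_ring_1 poly)"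
  by (intro poly_eqI) (simp add: coeff_coeff_homog)

lemma homog_smult: "homog k (smult c p) = smult [:c:] (homog k p)"
  by (intro poly_eqI) (simp add: coeff_coeff_homog)

lemma homog_X_mult: "homog (Suc k) (pCons 0 h) = varS * homog k h"
proof (intro poly_eqI)
  fix j i
  have "coeff (varS * C) j = pCons 0 (coeff C j)" for C :: "'a poly poly"
    by (simp add: varS_def)
  then show "coeff (coeff (homog (Suc k) (pCons 0 h)) j) i = coeff (coeff (varS * homog k h) j) i"
    by (cases i) (auto simp: coeff_coeff_homog coeff_pCons)
qed

lemma homog_Suc: "degree h \<le> k \<Longrightarrow> homog (Suc k) h = varT * homog k h"
proof (intro poly_eqI)
  fix j i
  assume "degree h \<le> k"
  then have "coeff h (Suc k) = 0" by (intro coeff_eq_0) simp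
  then show "coeff (coeff (homog (Suc k) h) j) i = coeff (coeff (varT * homog k h) j) i"
    by (cases j) (auto simp: varT_def coeff_coeff_homog)
qed

lemma homog_raise_degree: "degree h \<le> k \<Longrightarrow> homog (k + r) h = varT ^ r * homog k h"
  by (induct r) (simp_all add: homog_Suc mult.assoc)

lemma homog_X_minus_1_mult:
  fixes h :: "'a::comm_ring_1 poly"
  assumes "degree h \<le> k"
  shows "homog (Suc k) ([:-1, 1:] * h) = (varS - varT) * homog k h"
proof -
  have "[:-1, 1:] * h = pCons 0 h - h" by simp
  then show ?thesis
    using assms by (simp add: homog_diff homog_X_mult homog_Suc left_diff_distrib)
qed

lemma homog_X_minus_1_power:
  "homog b ([:-1, 1:] ^ b) = (varS - varT :: 'a::comm_ring_1 poly poly) ^ b"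
proof (induct b)
  case 0
  show ?case by (simp add: homog_def)
next
  case (Suc b)
  have "degree ([:-1, 1:] ^ b :: 'a poly) \<le> b"
    by (rule order.trans[OF degree_power_le]) simp
  then have "homog (Suc b) ([:-1, 1:] * [:-1, 1:] ^ b) =
      (varS - varT) * homog b ([:-1, 1:] ^ b :: 'a poly)"
    by (rule homog_X_minus_1_mult)
  then show ?case by (simp only: power_Suc Suc.hyps)
qed

lemma homog_X_power_X_minus_1_power:
  "homog (a + b) ([:0, 1:] ^ a * [:-1, 1:] ^ b) =
    varS ^ a * (varS - varT :: 'a::comm_ring_1 poly poly) ^ b"
  by (induct a) (simp_all add: homog_X_minus_1_power homog_X_mult)

lemma total_degree_bound: "\<exists>N. \<forall>i j. N < i + j \<longrightarrow> coeff (coeff B j) i = 0"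
proof (intro exI allI impI)
  fix i j
  assume less: "degree B + (\<Sum>j\<le>degree B. degree (coeff B j)) < i + j"
  show "coeff (coeff B j) i = 0"
  proof (cases "j \<le> degree B")
    case True
    then have "degree (coeff B j) \<le> (\<Sum>j\<le>degree B. degree (coeff B j))"
      by (intro member_le_sum) auto
    then show ?thesis using less True by (intro coeff_eq_0) simp
  qed (simp add: coeff_eq_0)
qed

lemma sum_homog_dehom:
  assumes "\<forall>i j. N < i + j \<longrightarrow> coeff (coeff B j) i = 0"
  shows "(\<Sum>k\<le>N. homog k (dehom k B)) = B"
proof (intro poly_eqI)
  fix j i
  have "coeff (coeff (\<Sum>k\<le>N. homog k (dehom k B)) j) i =
      (\<Sum>k\<le>N. if k = i + j then coeff (coeff B j) i else 0)"
    unfolding coeff_sum by (intro sum.cong) (auto simp: coeff_coeff_homog coeff_dehom)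
  also have "\<dots> = coeff (coeff B j) i"
    using assms by (auto simp: sum.delta')
  finally show "coeff (coeff (\<Sum>k\<le>N. homog k (dehom k B)) j) i = coeff (coeff B j) i" .
qed

lemma dehom_add: "dehom k (B1 + B2) = dehom k B1 + dehom k B2"
  by (rule poly_eqI) (simp add: coeff_dehom)

lemma dehom_smult: "dehom k (smult [:c:] B) = smult c (dehom k B)"
  by (rule poly_eqI) (simp add: coeff_dehom)

lemma dehom_varT_mult: "dehom (Suc k) (varT * B) = dehom k B"
proof (rule poly_eqI)
  fix i
  have "varT * B = pCons 0 B" by (simp add: varT_def)
  then show "coeff (dehom (Suc k) (varT * B)) i = coeff (dehom k B) i"
    by (cases "i \<le> k") (auto simp: coeff_dehom Suc_diff_le)
qed

lemma dehom_varT_power_mult: "dehom (k + r) (varT ^ r * B) = dehom k B"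
  by (induct r) (simp_all add: dehom_varT_mult mult.assoc)

lemma dehom_varS_mult: "dehom (Suc k) (varS * B) = pCons 0 (dehom k B)"
proof (rule poly_eqI)
  fix i
  have "coeff (varS * B) j = pCons 0 (coeff B j)" for j
    by (simp add: varS_def)
  then show "coeff (dehom (Suc k) (varS * B)) i = coeff (pCons 0 (dehom k B)) i"
    by (cases i) (auto simp: coeff_dehom coeff_pCons)
qed

lemma dvd_ecomm_poly:
  fixes x y :: "'a::comm_ring_1"
  assumes "r \<le> m" "a \<le> m" "b \<le> m"
  shows "x ^ r * (y ^ a * (y - x) ^ b) dvd y ^ m * x ^ m * (x - y) ^ m"
proof -
  have "(y - x) ^ b dvd (x - y) ^ m"
  proof -
    have "(y - x) ^ b dvd (y - x) ^ m"
      using assms(3) by (rule le_imp_power_dvd)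
    moreover have "(x - y) ^ m = (- 1) ^ m * (y - x) ^ m"
      by (simp flip: power_mult_distrib)
    ultimately show ?thesis
      by simp
  qed
  then have "y ^ a * (x ^ r * (y - x) ^ b) dvd y ^ m * (x ^ m * (x - y) ^ m)"
    using assms by (intro mult_dvd_mono le_imp_power_dvd) auto
  then show ?thesis
    by (simp add: mult_ac)
qed

section \<open>The action of K[S,T] on an algebra\<close>

locale assoc_algebra =
  fixes sc :: "'k::idom \<Rightarrow> 'r::ring \<Rightarrow> 'r"
  assumes k_algebra: "k_algebra sc"
begin

sublocale Modules.module sc
  using k_algebra unfolding k_algebra_def by blast

lemma scale_mult_left: "sc a (x * y) = sc a x * y"
  using k_algebra unfolding k_algebra_def by blast

lemma scale_mult_right: "sc a (x * y) = x * sc a y"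
  using k_algebra unfolding k_algebra_def by blast

(* With L x = y x and R x = x y: lact y g x = g(L) x and act y B x = B(L, R) x. *)
definition lact :: "'r \<Rightarrow> 'k poly \<Rightarrow> 'r \<Rightarrow> 'r" where
  "lact y g x = fold_coeffs (\<lambda>c F z. sc c z + y * F z) g (\<lambda>z. 0) x"

definition act :: "'r \<Rightarrow> 'k poly poly \<Rightarrow> 'r \<Rightarrow> 'r" where
  "act y B x = fold_coeffs (\<lambda>g F z. lact y g z + F z * y) B (\<lambda>z. 0) x"

lemma lact_0 [simp]: "lact y 0 x = 0"
  by (simp add: lact_def)

lemma lact_pCons: "lact y (pCons c g) x = sc c x + y * lact y g x"
  by (cases "pCons c g = 0") (auto simp: lact_def)

lemma lact_const: "lact y [:c:] x = sc c x"
  by (simp add: lact_pCons)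

lemma lact_arg_0 [simp]: "lact y g 0 = 0"
  by (induct g) (simp_all add: lact_pCons)

lemma lact_arg_add: "lact y g (x1 + x2) = lact y g x1 + lact y g x2"
  by (induct g) (simp_all add: lact_pCons scale_right_distrib distrib_left algebra_simps)

lemma lact_arg_mult_right: "lact y g (x * w) = lact y g x * w"
  by (induct g) (simp_all add: lact_pCons scale_mult_left distrib_right mult.assoc)

lemma lact_arg_mult_left: "lact y g (y * x) = y * lact y g x"
  by (induct g) (simp_all add: lact_pCons scale_mult_right distrib_left mult.assoc)

lemma lact_add: "lact y (g1 + g2) x = lact y g1 x + lact y g2 x"
proof (induct g1 arbitrary: g2)
  case (pCons a p)
  obtain b q where "g2 = pCons b q"
    by (cases g2 rule: pCons_cases)
  moreover have "lact y (p + q) x = lact y p x + lact y q x"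
    by (rule pCons.hyps(2))
  ultimately show ?case
    by (simp add: lact_pCons scale_left_distrib distrib_left algebra_simps)
qed simp

lemma lact_smult: "lact y (smult c g) x = sc c (lact y g x)"
  by (induct g) (simp_all add: lact_pCons scale_right_distrib scale_mult_right)

lemma lact_mult: "lact y (g1 * g2) x = lact y g1 (lact y g2 x)"
  by (induct g1) (simp_all add: lact_pCons lact_add lact_smult)

lemma lact_X_power: "lact y ([:0, 1:] ^ n) x = lpow y n x"
  by (induct n) (simp_all add: lpow_def lact_mult lact_pCons flip: pCons_one)

lemma act_0 [simp]: "act y 0 x = 0"
  by (simp add: act_def)

lemma act_pCons: "act y (pCons g B) x = lact y g x + act y B x * y"
  by (cases "pCons g B = 0") (auto simp: act_def)

lemma act_const: "act y [:g:] x = lact y g x"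
  by (simp add: act_pCons)

lemma act_arg_0 [simp]: "act y B 0 = 0"
  by (induct B) (simp_all add: act_pCons)

lemma act_add: "act y (B1 + B2) x = act y B1 x + act y B2 x"
proof (induct B1 arbitrary: B2)
  case (pCons a p)
  obtain b q where "B2 = pCons b q"
    by (cases B2 rule: pCons_cases)
  moreover have "act y (p + q) x = act y p x + act y q x"
    by (rule pCons.hyps(2))
  ultimately show ?case
    by (simp add: act_pCons lact_add distrib_right algebra_simps)
qed simp

lemma act_diff: "act y (B1 - B2) x = act y B1 x - act y B2 x"
  using act_add[of y "B1 - B2" B2 x] by (simp add: algebra_simps)

lemma act_sum: "act y (\<Sum>i\<in>A. B i) x = (\<Sum>i\<in>A. act y (B i) x)"
  by (induct A rule: infinite_finite_induct) (simp_all add: act_add)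

lemma act_smult: "act y (smult g C) x = lact y g (act y C x)"
  by (induct C) (simp_all add: act_pCons lact_mult lact_arg_add lact_arg_mult_right)

lemma act_smult_const: "act y (smult [:c:] C) x = sc c (act y C x)"
  by (simp add: act_smult lact_const)

lemma act_mult: "act y (B * C) x = act y B (act y C x)"
  by (induct B) (simp_all add: act_pCons act_add act_smult)

lemma act_1: "act y 1 x = x"
  by (simp add: act_pCons lact_pCons flip: pCons_one)

lemma act_varS: "act y varS x = y * x"
  by (simp add: varS_def act_const lact_pCons)

lemma act_varT: "act y varT x = x * y"
  by (simp add: varT_def act_pCons act_1 lact_const flip: pCons_one)

lemma act_varS_power: "act y (varS ^ n) x = lpow y n x"
  by (induct n) (simp_all add: lpow_def act_mult act_1 act_varS)

lemma act_varT_power: "act y (varT ^ n) x = rpow y n x"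
  by (induct n) (simp_all add: rpow_def act_mult act_1 act_varT)

lemma act_homog: "act y (homog n h) x = (\<Sum>i\<le>n. sc (coeff h i) (lpow y i (rpow y (n - i) x)))"
proof -
  have "monom (monom c i) j = smult (monom c i) (varT ^ j)" for c :: 'k and i j
    by (simp add: varT_def monom_altdef)
  moreover have "monom c i = smult c ([:0, 1:] ^ i)" for c :: 'k and i
    by (simp add: monom_altdef)
  ultimately show ?thesis
    by (simp add: homog_def act_sum act_smult lact_smult lact_X_power act_varT_power)
qed

lemma lact_subst:
  assumes "\<And>z. lact y \<phi> z = y' * z"
  shows "lact y' g x = lact y (pcompose g \<phi>) x"
  by (induct g arbitrary: x)
    (simp_all add: pcompose_pCons lact_pCons lact_add lact_mult lact_const assms)

lemma act_subst_ST:
  assumes "\<And>z. lact y \<phi> z = y' * z" and "\<And>z. act y (map_poly (\<lambda>c. [:c:]) \<phi>) z = z * y'"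
  shows "act y' B x = act y (subst_ST \<phi> B) x"
proof (induct B arbitrary: x)
  case (pCons g B)
  have "subst_ST \<phi> (pCons g B) = [:pcompose g \<phi>:] + map_poly (\<lambda>c. [:c:]) \<phi> * subst_ST \<phi> B"
    by (simp add: subst_ST_def map_poly_pCons pcompose_pCons)
  then show ?case
    using pCons(2) by (simp add: act_pCons act_add act_mult act_const assms lact_subst[OF assms(1)])
qed (simp add: subst_ST_def)

lemma act_map_poly_const_mult:
  "act y (map_poly (\<lambda>c. [:c:]) \<psi>) z * y = z * lact y \<psi> y"
proof (induct \<psi> arbitrary: z)
  case (pCons c \<psi>)
  have "lact y \<psi> y * y = y * lact y \<psi> y"
    by (metis lact_arg_mult_left lact_arg_mult_right)
  then show ?case
    using pCons(2)
    by (simp add: map_poly_pCons act_pCons lact_pCons lact_const distrib_left distrib_right mult.assoc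
        flip: scale_mult_left scale_mult_right)
qed (simp add: map_poly_pCons)

lemma act_subst_ST_pCons_0: "act (lact y \<psi> y) B x = act y (subst_ST (pCons 0 \<psi>) B) x"
proof (rule act_subst_ST)
  show "lact y (pCons 0 \<psi>) z = lact y \<psi> y * z" for z
    by (simp add: lact_pCons flip: lact_arg_mult_left lact_arg_mult_right)
  show "act y (map_poly (\<lambda>c. [:c:]) (pCons 0 \<psi>)) z = z * lact y \<psi> y" for z
    by (simp add: map_poly_pCons act_pCons lact_pCons act_map_poly_const_mult)
qed

lemma lpow_scale_arg: "lpow y i (sc c z) = sc c (lpow y i z)"
  by (induct i) (simp_all add: lpow_def scale_mult_right)

lemma lpow_scale: "lpow (sc \<mu> y) i z = sc (\<mu> ^ i) (lpow y i z)"
  by (induct i) (simp_all add: lpow_def scale_mult_right mult.commute flip: scale_mult_left)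

lemma rpow_scale: "rpow (sc \<mu> y) i z = sc (\<mu> ^ i) (rpow y i z)"
  by (induct i) (simp_all add: rpow_def scale_mult_left mult.commute flip: scale_mult_right)

lemma act_homog_scale: "act (sc \<mu> y) (homog n h) x = sc (\<mu> ^ n) (act y (homog n h) x)"
proof -
  have "sc (coeff h i) (lpow (sc \<mu> y) i (rpow (sc \<mu> y) (n - i) x)) =
      sc (\<mu> ^ n) (sc (coeff h i) (lpow y i (rpow y (n - i) x)))" if "i \<le> n" for i
  proof -
    have "\<mu> ^ i * \<mu> ^ (n - i) = \<mu> ^ n"
      using that by (simp flip: power_add)
    then show ?thesis
      by (simp add: lpow_scale rpow_scale lpow_scale_arg mult_ac)
  qed
  then show ?thesis
    by (simp add: act_homog scale_sum_right)
qed

lemma act_scale: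
  assumes "\<forall>i j. N < i + j \<longrightarrow> coeff (coeff B j) i = 0"
  shows "act (sc \<mu> y) B x = (\<Sum>k\<le>N. sc (\<mu> ^ k) (act y (homog k (dehom k B)) x))"
  by (subst (1) sum_homog_dehom[OF assms, symmetric]) (simp add: act_sum act_homog_scale)

lemma ecomm_eq_act: "ecomm x y m = act y ((varT - varS) ^ m) x"
proof (induct m)
  case (Suc m)
  have "ecomm x y (Suc m) = comm (ecomm x y m) y"
    by (simp add: ecomm_def)
  then show ?case
    using Suc by (simp add: comm_def act_mult act_diff act_varT act_varS)
qed (simp add: ecomm_def act_1)

definition Ann :: "'k poly poly set" where
  "Ann = {B. \<forall>x y. act y B x = 0}"

lemma Ann_mult: "B \<in> Ann \<Longrightarrow> C * B \<in> Ann"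
  by (simp add: Ann_def act_mult)

lemma Ann_add: "B1 \<in> Ann \<Longrightarrow> B2 \<in> Ann \<Longrightarrow> B1 + B2 \<in> Ann"
  by (simp add: Ann_def act_add)

lemma Ann_dvd: "B \<in> Ann \<Longrightarrow> B dvd C \<Longrightarrow> C \<in> Ann"
  by (metis Ann_mult dvdE mult.commute)

lemma Ann_subst: "B \<in> Ann \<Longrightarrow> subst_ST (pCons 0 \<psi>) B \<in> Ann"
  by (simp add: Ann_def flip: act_subst_ST_pCons_0)

definition Dehom_Ann :: "'k poly set" where
  "Dehom_Ann = {dehom k B |k B. B \<in> Ann}"

lemma Dehom_Ann_add:
  assumes "h1 \<in> Dehom_Ann" "h2 \<in> Dehom_Ann"
  shows "h1 + h2 \<in> Dehom_Ann"
proof -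
  obtain B1 k1 B2 k2 where B: "B1 \<in> Ann" "h1 = dehom k1 B1" "B2 \<in> Ann" "h2 = dehom k2 B2"
    using assms unfolding Dehom_Ann_def by blast
  then have "h1 + h2 = dehom (k1 + k2) (varT ^ k2 * B1 + varT ^ k1 * B2)"
    by (simp add: dehom_add dehom_varT_power_mult add.commute[of k1]
        flip: dehom_varT_power_mult[of k1 k2])
  moreover have "varT ^ k2 * B1 + varT ^ k1 * B2 \<in> Ann"
    using B by (simp add: Ann_add Ann_mult)
  ultimately show ?thesis
    unfolding Dehom_Ann_def by blast
qed

lemma Dehom_Ann_smult:
  assumes "h \<in> Dehom_Ann"
  shows "smult c h \<in> Dehom_Ann"
proof -
  obtain B k where "B \<in> Ann" "h = dehom k B"
    using assms unfolding Dehom_Ann_def by blast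
  then have "smult [:c:] B \<in> Ann" "smult c h = dehom k (smult [:c:] B)"
    using Ann_mult[of B "[:[:c:]:]"] by (simp_all add: dehom_smult)
  then show ?thesis
    unfolding Dehom_Ann_def by blast
qed

lemma Dehom_Ann_X_mult:
  assumes "h \<in> Dehom_Ann"
  shows "pCons 0 h \<in> Dehom_Ann"
proof -
  obtain B k where "B \<in> Ann" "h = dehom k B"
    using assms unfolding Dehom_Ann_def by blast
  then have "varS * B \<in> Ann" "pCons 0 h = dehom (Suc k) (varS * B)"
    by (simp_all add: Ann_mult dehom_varS_mult)
  then show ?thesis
    unfolding Dehom_Ann_def by blast
qed

lemma Dehom_Ann_mult: "h \<in> Dehom_Ann \<Longrightarrow> q * h \<in> Dehom_Ann"
proof (induct q)
  case 0
  have "0 \<in> Ann"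
    by (simp add: Ann_def)
  then show ?case
    unfolding Dehom_Ann_def by (force simp: dehom_def)
next
  case (pCons a p)
  then show ?case
    by (simp add: Dehom_Ann_add Dehom_Ann_smult Dehom_Ann_X_mult)
qed

lemma Dehom_Ann_diff: "h1 \<in> Dehom_Ann \<Longrightarrow> h2 \<in> Dehom_Ann \<Longrightarrow> h1 - h2 \<in> Dehom_Ann"
  using Dehom_Ann_add[of h1 "smult (-1) h2"] Dehom_Ann_smult[of h2 "-1"] by simp

end

locale tf_algebra = assoc_algebra +
  assumes torsion_free: "torsion_free_action sc"
begin

lemma scale_eq_0_iff: "sc a x = 0 \<longleftrightarrow> a = 0 \<or> x = 0"
  using torsion_free unfolding torsion_free_action_def by auto

lemma Ann_smult_cancel: "smult [:c:] B \<in> Ann \<Longrightarrow> c \<noteq> 0 \<Longrightarrow> B \<in> Ann"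
  by (simp add: Ann_def act_smult_const scale_eq_0_iff)

lemma sum_scale_powers_diff:
  "(\<Sum>e\<le>Suc N. sc (\<mu> ^ e) (c e)) - (\<Sum>e\<le>Suc N. sc (\<mu>0 ^ e) (c e)) =
   sc (\<mu> - \<mu>0) (\<Sum>k\<le>N. sc (\<mu> ^ k) (\<Sum>e\<in>{Suc k..Suc N}. sc (\<mu>0 ^ (e - Suc k)) (c e)))"
proof -
  have "(\<Sum>e\<le>Suc N. sc (\<mu> ^ e) (c e)) - (\<Sum>e\<le>Suc N. sc (\<mu>0 ^ e) (c e)) =
        (\<Sum>e\<le>Suc N. sc (\<mu> ^ e - \<mu>0 ^ e) (c e))"
    by (simp add: sum_subtractf scale_left_diff_distrib)
  also have "\<dots> = (\<Sum>e\<le>Suc N. sc (\<mu> - \<mu>0) (\<Sum>k<e. sc (\<mu> ^ k) (sc (\<mu>0 ^ (e - Suc k)) (c e))))"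
    by (intro sum.cong)
      (simp_all add: power_diff_sumr2 sum_distrib_left scale_sum_left scale_sum_right mult_ac)
  also have "\<dots> =
      sc (\<mu> - \<mu>0) (\<Sum>k<Suc N. \<Sum>e\<in>{Suc k..Suc N}. sc (\<mu> ^ k) (sc (\<mu>0 ^ (e - Suc k)) (c e)))"
    by (simp add: sum.nested_swap' flip: scale_sum_right)
  also have "\<dots> = sc (\<mu> - \<mu>0) (\<Sum>k\<le>N. sc (\<mu> ^ k) (\<Sum>e\<in>{Suc k..Suc N}. sc (\<mu>0 ^ (e - Suc k)) (c e)))"
    by (simp only: lessThan_Suc_atMost scale_sum_right)
  finally show ?thesis .
qed

lemma coeff_eq_0_if_vanishes_on_infinite:
  assumes "infinite A" and "\<forall>\<mu>\<in>A. (\<Sum>k\<le>N. sc (\<mu> ^ k) (c k)) = 0" and "k \<le> N"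
  shows "c k = 0"
  using assms
proof (induct N arbitrary: c A k)
  case 0
  then obtain \<mu> where "\<mu> \<in> A"
    by (metis finite.emptyI ex_in_conv)
  with 0 show ?case by auto
next
  case (Suc N)
  obtain \<mu>0 where \<mu>0: "\<mu>0 \<in> A"
    using Suc.prems(1) by (metis finite.emptyI ex_in_conv)
  define d where "d k = (\<Sum>e\<in>{Suc k..Suc N}. sc (\<mu>0 ^ (e - Suc k)) (c e))" for k
  have "(\<Sum>k\<le>N. sc (\<mu> ^ k) (d k)) = 0" if "\<mu> \<in> A - {\<mu>0}" for \<mu>
  proof -
    have "sc (\<mu> - \<mu>0) (\<Sum>k\<le>N. sc (\<mu> ^ k) (d k)) =
        (\<Sum>e\<le>Suc N. sc (\<mu> ^ e) (c e)) - (\<Sum>e\<le>Suc N. sc (\<mu>0 ^ e) (c e))"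
      unfolding d_def by (rule sum_scale_powers_diff[symmetric])
    also have "\<dots> = 0"
      using that \<mu>0 Suc.prems(2) by simp
    finally have "sc (\<mu> - \<mu>0) (\<Sum>k\<le>N. sc (\<mu> ^ k) (d k)) = 0" .
    then show ?thesis
      using that by (simp add: scale_eq_0_iff)
  qed
  then have "d k = 0" if "k \<le> N" for k
    using Suc.hyps[of "A - {\<mu>0}" d k] Suc.prems(1) that by auto
  then have top: "c (Suc N) = 0"
    using d_def[of N] by simp
  then have "c k = 0" if "k \<le> N" for k
    using Suc.hyps[of A] Suc.prems(1,2) that by simp
  then show ?case
    using top Suc.prems(3) le_Suc_eq by blast
qed

end

section \<open>Evaluation in an algebraic closure\<close>

lemma alg_closed_roots_01_factorization:
  fixes p :: "'a::alg_closed_field poly"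
  assumes "p \<noteq> 0" and roots: "\<And>x. poly p x = 0 \<Longrightarrow> x = 0 \<or> x = 1"
  shows "\<exists>a b. p = smult (lead_coeff p) ([:0, 1:] ^ a * [:-1, 1:] ^ b)"
proof -
  obtain A where A: "p = smult (lead_coeff p) (\<Prod>x\<in>#A. [:-x, 1:])"
    using alg_closed_imp_factorization[OF assms(1)] by blast
  have "x = 0 \<or> x = 1" if "x \<in># A" for x
  proof (rule roots)
    have "poly (\<Prod>x\<in>#A. [:-x, 1:]) x = 0"
      using that by (auto simp: poly_prod_mset prod_mset_zero_iff)
    then show "poly p x = 0"
      by (subst A) simp
  qed
  then have "A = replicate_mset (count A 0) 0 + replicate_mset (count A 1) 1"
    by (intro multiset_eqI) (auto simp: count_eq_zero_iff)
  then have "(\<Prod>x\<in>#A. [:-x, 1:]) = [:0, 1:] ^ count A 0 * [:-1, 1:] ^ count A 1"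
    by (metis (no_types, lifting) image_mset_union image_replicate_mset prod_mset.union
        prod_mset_replicate_mset minus_zero)
  then show ?thesis
    using A by metis
qed

definition emb :: "'a::idom \<Rightarrow> 'a fract alg_closure" where
  "emb c = to_ac (to_fract c)"

lemma emb_0 [simp]: "emb 0 = 0"
  and emb_1 [simp]: "emb 1 = 1"
  and emb_add [simp]: "emb (a + b) = emb a + emb b"
  and emb_mult [simp]: "emb (a * b) = emb a * emb b"
  and emb_uminus [simp]: "emb (- a) = - emb a"
  and emb_eq_iff [simp]: "emb a = emb b \<longleftrightarrow> a = b"
  and emb_eq_0_iff [simp]: "emb a = 0 \<longleftrightarrow> a = 0"
  by (simp_all add: emb_def)

lemma emb_sum [simp]: "emb (\<Sum>i\<in>A. f i) = (\<Sum>i\<in>A. emb (f i))"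
  by (simp add: emb_def to_ac_sum)

lemma map_poly_emb_add [simp]: "map_poly emb (p + q) = map_poly emb p + map_poly emb q"
  by (rule poly_eqI) (simp add: coeff_map_poly)

lemma map_poly_emb_mult [simp]: "map_poly emb (p * q) = map_poly emb p * map_poly emb q"
  by (rule poly_eqI) (simp add: coeff_map_poly coeff_mult)

lemma map_poly_emb_smult [simp]: "map_poly emb (smult c p) = smult (emb c) (map_poly emb p)"
  by (rule poly_eqI) (simp add: coeff_map_poly)

lemma map_poly_emb_pCons [simp]: "map_poly emb (pCons c p) = pCons (emb c) (map_poly emb p)"
  by (simp add: map_poly_pCons)

lemma map_poly_emb_power [simp]: "map_poly emb (p ^ n) = map_poly emb p ^ n"
  by (induct n) simp_all

lemma map_poly_emb_eq_iff [simp]: "map_poly emb p = map_poly emb q \<longleftrightarrow> p = q"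
  by (auto simp: poly_eq_iff coeff_map_poly)

lemma map_poly_emb_eq_0_iff [simp]: "map_poly emb p = 0 \<longleftrightarrow> p = 0"
  using map_poly_emb_eq_iff[of p 0] by (simp del: map_poly_emb_eq_iff)

lemma lead_coeff_map_poly_emb [simp]: "lead_coeff (map_poly emb p) = emb (lead_coeff p)"
  by (simp add: degree_map_poly coeff_map_poly)

definition ev :: "'a fract alg_closure \<Rightarrow> 'a::idom poly \<Rightarrow> 'a fract alg_closure" where
  "ev a g = poly (map_poly emb g) a"

lemma ev_simps [simp]:
  "ev a 0 = 0"
  "ev a (pCons c g) = emb c + a * ev a g"
  "ev a (g1 + g2) = ev a g1 + ev a g2"
  "ev a (g1 * g2) = ev a g1 * ev a g2"
  "ev a (smult c g) = emb c * ev a g"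
  by (simp_all add: ev_def)

lemma ev_pcompose: "ev a (pcompose g \<phi>) = ev (ev a \<phi>) g"
  by (induct g) (simp_all add: pcompose_pCons)

lemma ev_monom: "ev a (monom c i) = emb c * a ^ i"
  by (induct i) (simp_all add: monom_Suc monom_0)

lemma ev_eq_sum:
  assumes "degree g \<le> n"
  shows "ev a g = (\<Sum>i\<le>n. emb (coeff g i) * a ^ i)"
  using assms by (simp add: ev_def poly_altdef degree_map_poly coeff_map_poly
      sum.mono_neutral_right[of "{..n}" "{..degree g}"] coeff_eq_0)

(* ev2 a b B = B(a, b): S is evaluated at a and T at b *)
definition ev2 ::
    "'a fract alg_closure \<Rightarrow> 'a fract alg_closure \<Rightarrow> 'a::idom poly poly \<Rightarrow> 'a fract alg_closure" where
  "ev2 a b B = poly (map_poly (ev a) B) b"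

lemma ev2_pCons [simp]: "ev2 a b (pCons g B) = ev a g + b * ev2 a b B"
  by (simp add: ev2_def map_poly_pCons)

lemma ev2_0 [simp]: "ev2 a b 0 = 0"
  by (simp add: ev2_def)

lemma ev2_add [simp]: "ev2 a b (B1 + B2) = ev2 a b B1 + ev2 a b B2"
proof (induct B1 arbitrary: B2)
  case (pCons g p)
  obtain h q where "B2 = pCons h q"
    by (cases B2 rule: pCons_cases)
  moreover have "ev2 a b (p + q) = ev2 a b p + ev2 a b q"
    by (rule pCons.hyps(2))
  ultimately show ?case
    by (simp add: algebra_simps)
qed simp

lemma ev2_smult [simp]: "ev2 a b (smult g B) = ev a g * ev2 a b B"
  by (induct B) (simp_all add: algebra_simps)

lemma ev2_mult [simp]: "ev2 a b (B * C) = ev2 a b B * ev2 a b C"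
  by (induct B) (simp_all add: algebra_simps)

lemma ev2_sum: "ev2 a b (\<Sum>i\<in>A. f i) = (\<Sum>i\<in>A. ev2 a b (f i))"
  by (induct A rule: infinite_finite_induct) simp_all

lemma ev2_monom: "ev2 a b (monom g j) = ev a g * b ^ j"
  by (induct j) (simp_all add: monom_Suc monom_0)

lemma ev2_subst_ST: "ev2 a b (subst_ST \<phi> B) = ev2 (ev a \<phi>) (ev b \<phi>) B"
proof -
  have const: "ev2 a b (map_poly (\<lambda>c. [:c:]) \<phi>) = ev b \<phi>"
    by (induct \<phi>) (simp_all add: map_poly_pCons)
  have "ev2 a b (pcompose C (map_poly (\<lambda>c. [:c:]) \<phi>)) = poly (map_poly (ev a) C) (ev b \<phi>)" for C
    by (induct C) (simp_all add: pcompose_pCons map_poly_pCons const)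
  then show ?thesis
    by (simp add: subst_ST_def ev2_def map_poly_map_poly o_def ev_pcompose)
qed

lemma ev2_homog: "ev2 a b (homog n h) = (\<Sum>i\<le>n. emb (coeff h i) * a ^ i * b ^ (n - i))"
  by (simp add: homog_def ev2_sum ev2_monom ev_monom)

lemma ev2_homog_eq_ev:
  assumes "degree h \<le> n" and "b \<noteq> 0"
  shows "ev2 a b (homog n h) = b ^ n * ev (a / b) h"
proof -
  have "emb (coeff h i) * a ^ i * b ^ (n - i) = b ^ n * (emb (coeff h i) * (a / b) ^ i)"
    if "i \<le> n" for i
  proof -
    have "b ^ n = b ^ (n - i) * b ^ i"
      using that by (simp flip: power_add)
    then show ?thesis
      using assms(2) by (simp add: power_divide field_simps)
  qed
  then show ?thesis
    unfolding ev2_homog ev_eq_sum[OF assms(1)] sum_distrib_left by (intro sum.cong) auto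
qed

lemma ev2_at_1:
  assumes "\<forall>i j. N < i + j \<longrightarrow> coeff (coeff B j) i = 0"
  shows "ev2 a 1 B = (\<Sum>k\<le>N. ev a (dehom k B))"
  by (subst (1) sum_homog_dehom[OF assms, symmetric])
    (simp add: ev2_sum ev2_homog_eq_ev degree_dehom)

section \<open>Homogeneous identities\<close>

locale infinite_tf_algebra = tf_algebra sc for sc :: "'k::idom \<Rightarrow> 'r::ring \<Rightarrow> 'r" +
  assumes infinite_scalars: "infinite (UNIV :: 'k set)"
begin

lemma homog_dehom_in_Ann:
  assumes "B \<in> Ann"
  shows "homog k (dehom k B) \<in> Ann"
proof -
  obtain N where "\<forall>i j. N < i + j \<longrightarrow> coeff (coeff B j) i = 0"
    using total_degree_bound by blast
  then have N: "\<forall>i j. max N k < i + j \<longrightarrow> coeff (coeff B j) i = 0"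
    by simp
  have "act y (homog k (dehom k B)) x = 0" for x y
  proof (rule coeff_eq_0_if_vanishes_on_infinite[OF infinite_scalars])
    show "\<forall>\<mu>\<in>UNIV. (\<Sum>k\<le>max N k. sc (\<mu> ^ k) (act y (homog k (dehom k B)) x)) = 0"
      using assms by (simp add: Ann_def flip: act_scale[OF N])
  qed simp
  then show ?thesis
    by (simp add: Ann_def)
qed

lemma nonzero_in_Ann_imp_homog_in_Ann:
  assumes "B \<in> Ann" and "B \<noteq> 0"
  shows "\<exists>n h. h \<noteq> 0 \<and> degree h \<le> n \<and> homog n h \<in> Ann"
proof -
  define j where "j = degree B"
  define i where "i = degree (coeff B j)"
  have "coeff (coeff B j) i \<noteq> 0"
    using assms(2) by (simp add: i_def j_def)
  then have "dehom (i + j) B \<noteq> 0"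
    by (metis coeff_dehom coeff_0 add_diff_cancel_left' le_add1)
  then show ?thesis
    using homog_dehom_in_Ann[OF assms(1)] degree_dehom by blast
qed

lemma ev2_Ann_at_1:
  assumes "B \<in> Ann" and "\<forall>g\<in>Dehom_Ann. ev \<zeta> g = 0"
  shows "ev2 \<zeta> 1 B = 0"
proof -
  obtain N where "\<forall>i j. N < i + j \<longrightarrow> coeff (coeff B j) i = 0"
    using total_degree_bound by blast
  moreover have "dehom k B \<in> Dehom_Ann" for k
    using assms(1) unfolding Dehom_Ann_def by blast
  ultimately show ?thesis
    using assms(2) by (simp add: ev2_at_1)
qed

lemma common_root_of_Dehom_Ann_is_0_or_1:
  assumes "homog n h \<in> Ann" and "degree h \<le> n" and "h \<noteq> 0"
    and roots: "\<forall>g\<in>Dehom_Ann. ev \<zeta> g = 0"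
  shows "\<zeta> = 0 \<or> \<zeta> = 1"
proof (rule ccontr)
  assume "\<not> (\<zeta> = 0 \<or> \<zeta> = 1)"
  then have \<zeta>: "\<zeta> \<noteq> 0" "\<zeta> - 1 \<noteq> 0"
    by auto
  define \<xi> where "\<xi> l = \<zeta> * (1 + \<zeta> * emb l) / (1 + emb l)" for l
  have denom: "1 + emb l \<noteq> 0" if "l \<noteq> -1" for l
    using that emb_eq_0_iff[of "1 + l"] by (auto simp: add_eq_0_iff)
  have "ev (\<xi> l) h = 0" if "l \<noteq> -1" for l
  proof -
    (* substituting y + l y^2 for y turns the common root \<zeta> into the root \<xi> l of h *)
    have "subst_ST [:0, 1, l:] (homog n h) \<in> Ann"
      using assms(1) by (rule Ann_subst)
    then have "ev2 \<zeta> 1 (subst_ST [:0, 1, l:] (homog n h)) = 0"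
      using roots by (rule ev2_Ann_at_1)
    moreover have "ev \<zeta> [:0, 1, l:] = \<zeta> * (1 + \<zeta> * emb l)" "ev 1 [:0, 1, l:] = 1 + emb l"
      by (simp_all add: algebra_simps)
    ultimately have "ev2 (\<zeta> * (1 + \<zeta> * emb l)) (1 + emb l) (homog n h) = 0"
      by (simp add: ev2_subst_ST)
    then show ?thesis
      using denom[OF that] by (simp add: ev2_homog_eq_ev[OF assms(2)] \<xi>_def)
  qed
  then have "\<xi> ` {l. l \<noteq> -1} \<subseteq> {x. poly (map_poly emb h) x = 0}"
    by (auto simp: ev_def)
  then have "finite (\<xi> ` {l. l \<noteq> -1})"
    using assms(3) by (metis finite_subset map_poly_emb_eq_0_iff poly_roots_finite)
  moreover have "inj_on \<xi> {l. l \<noteq> -1}"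
  proof (rule inj_onI)
    fix l m
    assume "l \<in> {l. l \<noteq> -1}" "m \<in> {l. l \<noteq> -1}" and eq: "\<xi> l = \<xi> m"
    then have "1 + emb l \<noteq> 0" "1 + emb m \<noteq> 0"
      using denom by auto
    then have "\<zeta> * (1 + \<zeta> * emb l) * (1 + emb m) = \<zeta> * (1 + \<zeta> * emb m) * (1 + emb l)"
      using eq unfolding \<xi>_def by (metis frac_eq_eq)
    then have "\<zeta> * (\<zeta> - 1) * (emb l - emb m) = 0"
      by (simp add: algebra_simps)
    then show "l = m"
      using \<zeta> by simp
  qed
  ultimately have "finite {l :: 'k. l \<noteq> -1}"
    using finite_imageD by blast
  then show False
    using infinite_scalars by (simp add: Collect_neg_eq)
qed

lemma Dehom_Ann_min_degree_divides:
  assumes d: "d \<in> Dehom_Ann" "d \<noteq> 0"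
    and min: "\<And>g. g \<in> Dehom_Ann \<Longrightarrow> g \<noteq> 0 \<Longrightarrow> degree d \<le> degree g"
    and g: "g \<in> Dehom_Ann"
  shows "\<exists>c q. c \<noteq> 0 \<and> smult c g = d * q"
proof -
  obtain q r where qr: "pseudo_divmod g d = (q, r)"
    by (cases "pseudo_divmod g d")
  define c where "c = lead_coeff d ^ (Suc (degree g) - degree d)"
  have div: "smult c g = d * q + r" and rem: "r = 0 \<or> degree r < degree d"
    using pseudo_divmod[OF d(2) qr] unfolding c_def by blast+
  have "r = smult c g - q * d"
    using div by (simp add: algebra_simps)
  also have "\<dots> \<in> Dehom_Ann"
    using d(1) g by (intro Dehom_Ann_diff Dehom_Ann_smult Dehom_Ann_mult)
  finally have "r = 0"
    using rem min by (meson leD)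
  moreover have "c \<noteq> 0"
    using d(2) by (simp add: c_def)
  ultimately show ?thesis
    using div by auto
qed

lemma homog_in_Ann_imp_01_factorization:
  assumes "homog n h \<in> Ann" and "degree h \<le> n" and "h \<noteq> 0"
  obtains a b k where "a + b \<le> k" and "homog k ([:0, 1:] ^ a * [:-1, 1:] ^ b) \<in> Ann"
proof -
  have "h \<in> Dehom_Ann"
    using assms(1) dehom_homog[OF assms(2), symmetric] unfolding Dehom_Ann_def by blast
  then obtain d where d: "d \<in> Dehom_Ann" "d \<noteq> 0"
    and min: "\<And>g. g \<in> Dehom_Ann \<Longrightarrow> g \<noteq> 0 \<Longrightarrow> degree d \<le> degree g"
    using ex_has_least_nat[of "\<lambda>g. g \<in> Dehom_Ann \<and> g \<noteq> 0" h degree] assms(3) by blast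
  have "\<zeta> = 0 \<or> \<zeta> = 1" if "poly (map_poly emb d) \<zeta> = 0" for \<zeta>
  proof (rule common_root_of_Dehom_Ann_is_0_or_1[OF assms])
    show "\<forall>g\<in>Dehom_Ann. ev \<zeta> g = 0"
    proof
      fix g
      assume "g \<in> Dehom_Ann"
      then obtain c q where "c \<noteq> 0" and "smult c g = d * q"
        using Dehom_Ann_min_degree_divides[OF d min] by blast
      then have "emb c * ev \<zeta> g = ev \<zeta> d * ev \<zeta> q"
        by (metis ev_simps(4,5))
      then show "ev \<zeta> g = 0"
        using that \<open>c \<noteq> 0\<close> by (simp add: ev_def)
    qed
  qed
  then obtain a b where "map_poly emb d = smult (emb (lead_coeff d)) ([:0, 1:] ^ a * [:-1, 1:] ^ b)"
    using alg_closed_roots_01_factorization[of "map_poly emb d"] d(2) by auto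
  define P :: "'k poly" where "P = [:0, 1:] ^ a * [:-1, 1:] ^ b"
  define c where "c = lead_coeff d"
  have "map_poly emb d = map_poly emb (smult c P)"
    using \<open>map_poly emb d = _\<close> by (simp add: P_def c_def)
  then have d_eq: "d = smult c P"
    by (simp only: map_poly_emb_eq_iff)
  have "c \<noteq> 0"
    using d(2) by (simp add: c_def)
  obtain B k where B: "B \<in> Ann" "d = dehom k B"
    using d(1) unfolding Dehom_Ann_def by blast
  have "degree d = a + b"
    using \<open>c \<noteq> 0\<close> by (simp add: d_eq P_def degree_mult_eq degree_power_eq)
  then have "a + b \<le> k"
    using degree_dehom[of k B] B(2) by simp
  moreover have "homog k d \<in> Ann"
    using homog_dehom_in_Ann[OF B(1), of k] B(2) by simp
  then have "homog k P \<in> Ann"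
    using \<open>c \<noteq> 0\<close> by (simp add: d_eq homog_smult Ann_smult_cancel)
  ultimately show ?thesis
    unfolding P_def by (rule that)
qed

lemma homog_in_Ann_imp_ecomm_poly_in_Ann:
  assumes "homog n h \<in> Ann" and "degree h \<le> n" and "h \<noteq> 0"
  shows "\<exists>m\<ge>1. varS ^ m * varT ^ m * (varT - varS) ^ m \<in> Ann"
proof -
  obtain a b k where abk: "a + b \<le> k" and "homog k ([:0, 1:] ^ a * [:-1, 1:] ^ b) \<in> Ann"
    using homog_in_Ann_imp_01_factorization[OF assms] by blast
  moreover
  have "degree ([:0, 1:] ^ a * [:-1, 1:] ^ b :: 'k poly) \<le> a + b"
    by (simp add: degree_mult_eq degree_power_eq)
  then have "homog (a + b + (k - (a + b))) ([:0, 1:] ^ a * [:-1, 1:] ^ b :: 'k poly) =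
      varT ^ (k - (a + b)) * homog (a + b) ([:0, 1:] ^ a * [:-1, 1:] ^ b)"
    by (rule homog_raise_degree)
  ultimately have "varT ^ (k - (a + b)) * (varS ^ a * (varS - varT) ^ b) \<in> Ann"
    by (simp add: homog_X_power_X_minus_1_power)
  moreover have "varT ^ (k - (a + b)) * (varS ^ a * (varS - varT) ^ b) dvd
      (varS :: 'k poly poly) ^ Suc k * varT ^ Suc k * (varT - varS) ^ Suc k"
    using abk by (intro dvd_ecomm_poly) auto
  ultimately have "varS ^ Suc k * varT ^ Suc k * (varT - varS) ^ Suc k \<in> Ann"
    by (rule Ann_dvd)
  then show ?thesis
    by (intro exI[of _ "Suc k"]) simp
qed

end

section \<open>Binomial and semigroup identities\<close>

(* lin_part j k x y u: the sum of all products obtained from the word u by replacing exactly k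
   occurrences of the letter j by x and all other letters by y *)
fun lin_part :: "nat \<Rightarrow> nat \<Rightarrow> 'r::ring \<Rightarrow> 'r \<Rightarrow> nat list \<Rightarrow> 'r" where
  "lin_part j k x y [] = 0"
| "lin_part j k x y [i] = (if k = 0 then y else if k = 1 \<and> i = j then x else 0)"
| "lin_part j k x y (i # i' # w) = y * lin_part j k x y (i' # w) +
     (if i = j \<and> 0 < k then x * lin_part j (k - 1) x y (i' # w) else 0)"

lemma lin_part_eq_0: "length u < k \<Longrightarrow> lin_part j k x y u = 0"
  by (induct j k x y u rule: lin_part.induct) auto

lemma mult_lin_part_0: "w \<noteq> [] \<Longrightarrow> z * lin_part j 0 x y w = rpow y (length w) z"
proof (induct w arbitrary: z)
  case (Cons i w)
  show ?case
  proof (cases w)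
    case (Cons i' w')
    then have "z * lin_part j 0 x y (i # w) = (z * y) * lin_part j 0 x y w"
      by (simp add: mult.assoc)
    also have "\<dots> = rpow y (length w) (z * y)"
      using Cons.hyps Cons by simp
    also have "\<dots> = rpow y (length (i # w)) z"
      using funpow_swap1[of "\<lambda>w. w * y" "length w" z] by (simp add: rpow_def)
    finally show ?thesis .
  qed (simp add: rpow_def)
qed simp

fun word_poly :: "nat \<Rightarrow> nat list \<Rightarrow> 'a::comm_semiring_1 poly poly" where
  "word_poly j [] = 0"
| "word_poly j (i # w) = (if i = j then varT ^ length w else 0) + varS * word_poly j w"

lemma coeff_coeff_word_poly:
  "coeff (coeff (word_poly j u) b) a = (if a + b + 1 = length u \<and> u ! a = j then 1 else 0)"
proof (induct u arbitrary: a)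
  case (Cons i w)
  have "coeff (varS * C) b = pCons 0 (coeff C b)" for C :: "'a poly poly"
    by (simp add: varS_def)
  moreover have "coeff (coeff (varT ^ n :: 'a poly poly) b) a = (if a = 0 \<and> b = n then 1 else 0)"
    for n
    by (simp add: varT_def monom_altdef[of 1, simplified, symmetric] coeff_monom coeff_1)
  ultimately show ?case
    using Cons by (cases a) (auto simp: coeff_pCons)
qed simp

lemma word_poly_combination_nonzero:
  fixes a1 a2 :: "'a::comm_semiring_1"
  assumes "u1 \<noteq> []" and "u2 \<noteq> []" and "if u1 = u2 then a1 + a2 \<noteq> 0 else a1 \<noteq> 0 \<or> a2 \<noteq> 0"
  shows "\<exists>j. smult [:a1:] (word_poly j u1) + smult [:a2:] (word_poly j u2) \<noteq> 0"
proof -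
  let ?W = "\<lambda>j. smult [:a1:] (word_poly j u1) + smult [:a2:] (word_poly j u2)"
  have nonzero: "?W j \<noteq> 0" if "coeff (coeff (?W j) b) a \<noteq> 0" for j a b
    using that by (metis coeff_0)
  show ?thesis
  proof (cases "u1 = u2")
    case True
    then have "coeff (coeff (?W (u1 ! 0)) (length u1 - 1)) 0 \<noteq> 0"
      using assms by (simp add: coeff_coeff_word_poly)
    then show ?thesis
      using nonzero by blast
  next
    case False
    obtain a where a: "a < length u1" "a < length u2" "length u1 \<noteq> length u2 \<or> u1 ! a \<noteq> u2 ! a"
      using assms(1,2) False nth_equalityI[of u1 u2] by (cases "length u1 = length u2") auto
    show ?thesis
    proof (cases "a1 = 0")
      case True
      then have "coeff (coeff (?W (u2 ! a)) (length u2 - 1 - a)) a \<noteq> 0"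
        using assms(3) False a by (auto simp: coeff_coeff_word_poly)
      then show ?thesis
        using nonzero by blast
    next
      case False
      then have "coeff (coeff (?W (u1 ! a)) (length u1 - 1 - a)) a \<noteq> 0"
        using a by (auto simp: coeff_coeff_word_poly)
      then show ?thesis
        using nonzero by blast
    qed
  qed
qed

lemma weval_Cons: "w \<noteq> [] \<Longrightarrow> weval f (i # w) = f i * weval f w"
  by (cases w) simp_all

lemma weval_snoc: "w \<noteq> [] \<Longrightarrow> weval (f :: nat \<Rightarrow> 'a::semigroup_mult) (w @ [i]) = weval f w * f i"
proof (induct w)
  case (Cons j w)
  then show ?case
    by (cases "w = []") (simp_all add: weval_Cons mult.assoc)
qed simp

lemma weval_replicate_word:
  "weval (f :: nat \<Rightarrow> 'a::semigroup_mult) (replicate a i @ j # replicate b i) =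
    lpow (f i) a (rpow (f i) b (f j))"
proof -
  have "weval f (j # replicate b i) = rpow (f i) b (f j)"
    by (induct b) (simp_all add: rpow_def weval_snoc flip: replicate_append_same append_Cons)
  then show ?thesis
    by (induct a) (simp_all add: lpow_def weval_Cons)
qed

context assoc_algebra
begin

lemma act_word_poly: "act y (word_poly j u) x = lin_part j 1 x y u"
proof (induct u)
  case (Cons i w)
  show ?case
  proof (cases "w = []")
    case False
    then obtain i' w' where "w = i' # w'"
      by (cases w) auto
    then show ?thesis
      using Cons
      by (simp add: act_add act_mult act_varS act_varT act_varT_power mult_lin_part_0 rpow_def)
  qed (simp add: act_1)
qed simp

lemma weval_subst_expand:
  assumes "u \<noteq> []"
  shows "weval (\<lambda>i. if i = j then y + sc l x else y) u =
    (\<Sum>k\<le>length u. sc (l ^ k) (lin_part j k x y u))"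
  using assms
proof (induct u)
  case (Cons i w)
  let ?f = "\<lambda>i. if i = j then y + sc l x else y"
  show ?case
  proof (cases w)
    case (Cons i' w')
    let ?L = "length w"
    have IH: "weval ?f w = (\<Sum>k\<le>?L. sc (l ^ k) (lin_part j k x y w))"
      using Cons.hyps Cons by simp
    have lin_Cons: "lin_part j k x y (i # w) =
        y * lin_part j k x y w + (if i = j \<and> 0 < k then x * lin_part j (k - 1) x y w else 0)" for k
      using Cons by simp
    have "(\<Sum>k\<le>Suc ?L. sc (l ^ k) (lin_part j k x y (i # w))) =
      (\<Sum>k\<le>Suc ?L. sc (l ^ k) (y * lin_part j k x y w)) +
      (\<Sum>k\<le>Suc ?L. sc (l ^ k) (if i = j \<and> 0 < k then x * lin_part j (k - 1) x y w else 0))"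
      by (simp only: lin_Cons scale_right_distrib sum.distrib)
    also have "(\<Sum>k\<le>Suc ?L. sc (l ^ k) (y * lin_part j k x y w)) = y * weval ?f w"
      by (simp add: IH lin_part_eq_0 sum_distrib_left scale_mult_right)
    also have "(\<Sum>k\<le>Suc ?L. sc (l ^ k) (if i = j \<and> 0 < k then x * lin_part j (k - 1) x y w else 0)) =
        (if i = j then sc l x * weval ?f w else 0)"
    proof (cases "i = j")
      case True
      have "(\<Sum>k\<le>Suc ?L. sc (l ^ k) (if i = j \<and> 0 < k then x * lin_part j (k - 1) x y w else 0)) =
          (\<Sum>k\<le>?L. sc (l ^ Suc k) (x * lin_part j k x y w))"
        using True by (subst sum.atMost_Suc_shift) simp
      also have "\<dots> = sc l x * weval ?f w"
      proof -
        have "sc (l ^ Suc k) (x * z) = sc l x * sc (l ^ k) z" for k z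
          by (simp add: scale_mult_right flip: scale_mult_left)
        then show ?thesis
          by (simp only: IH sum_distrib_left)
      qed
      finally show ?thesis
        using True by simp
    qed simp
    finally show ?thesis
      using Cons by (simp add: weval_Cons distrib_right)
  qed simp
qed simp

lemma semigroup_identity_imp_binomial_identity:
  assumes "satisfies_semigroup_identity TYPE('r)"
  shows "satisfies_binomial_identity sc"
proof -
  obtain u v where "u \<noteq> []" "v \<noteq> []" "u \<noteq> v" "\<forall>f :: nat \<Rightarrow> 'r. weval f u = weval f v"
    using assms unfolding satisfies_semigroup_identity_def by blast
  then have "u \<noteq> [] \<and> v \<noteq> [] \<and> (if u = v then 1 + - 1 \<noteq> (0::'k) else 1 \<noteq> (0::'k) \<or> - 1 \<noteq> (0::'k)) \<and>
      (\<forall>f. sc 1 (weval f u) + sc (- 1) (weval f v) = 0)"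
    by simp
  then show ?thesis
    unfolding satisfies_binomial_identity_def by blast
qed

lemma homogeneous_identity_iff:
  "(\<exists>n \<alpha>. (\<exists>i\<le>n. \<alpha> i \<noteq> 0) \<and> (\<forall>x y. (\<Sum>i\<le>n. sc (\<alpha> i) (lpow y i (rpow y (n - i) x))) = 0)) \<longleftrightarrow>
   (\<exists>n h. h \<noteq> 0 \<and> degree h \<le> n \<and> homog n h \<in> Ann)"
proof
  assume "\<exists>n \<alpha>. (\<exists>i\<le>n. \<alpha> i \<noteq> 0) \<and> (\<forall>x y. (\<Sum>i\<le>n. sc (\<alpha> i) (lpow y i (rpow y (n - i) x))) = 0)"
  then obtain n \<alpha> where nz: "\<exists>i\<le>n. \<alpha> i \<noteq> 0"
    and id: "\<forall>x y. (\<Sum>i\<le>n. sc (\<alpha> i) (lpow y i (rpow y (n - i) x))) = 0"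
    by blast
  define h where "h = (\<Sum>i\<le>n. monom (\<alpha> i) i)"
  have coeff_h: "coeff h i = (if i \<le> n then \<alpha> i else 0)" for i
    by (simp add: h_def coeff_sum coeff_monom)
  have "h \<noteq> 0"
    using nz coeff_h by (metis coeff_0)
  moreover have "degree h \<le> n"
    by (rule degree_le) (simp add: coeff_h)
  moreover have "homog n h \<in> Ann"
    using id by (simp add: Ann_def act_homog coeff_h)
  ultimately show "\<exists>n h. h \<noteq> 0 \<and> degree h \<le> n \<and> homog n h \<in> Ann"
    by blast
next
  assume "\<exists>n h. h \<noteq> 0 \<and> degree h \<le> n \<and> homog n h \<in> Ann"
  then obtain n h where "h \<noteq> 0" "degree h \<le> n" "homog n h \<in> Ann"
    by blast
  then have "\<exists>i\<le>n. coeff h i \<noteq> 0"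
    by (intro exI[of _ "degree h"]) simp
  moreover have "\<forall>x y. (\<Sum>i\<le>n. sc (coeff h i) (lpow y i (rpow y (n - i) x))) = 0"
    using \<open>homog n h \<in> Ann\<close> by (simp add: Ann_def act_homog)
  ultimately show
    "\<exists>n \<alpha>. (\<exists>i\<le>n. \<alpha> i \<noteq> 0) \<and> (\<forall>x y. (\<Sum>i\<le>n. sc (\<alpha> i) (lpow y i (rpow y (n - i) x))) = 0)"
    by blast
qed

lemma ecomm_identity_iff:
  "(\<forall>x y :: 'r. lpow y m (rpow y m (ecomm x y m)) = 0) \<longleftrightarrow>
    varS ^ m * varT ^ m * (varT - varS) ^ m \<in> Ann"
  by (simp add: Ann_def act_mult act_varS_power act_varT_power ecomm_eq_act)

lemma swap_identity_imp_semigroup_identity: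
  assumes "a < b" and "varS ^ a * varT ^ b - varS ^ b * varT ^ a \<in> Ann"
  shows "satisfies_semigroup_identity TYPE('r)"
  unfolding satisfies_semigroup_identity_def
proof (intro exI conjI allI)
  let ?u = "replicate a (1::nat) @ 0 # replicate b 1"
  let ?v = "replicate b (1::nat) @ 0 # replicate a 1"
  show "?u \<noteq> []" "?v \<noteq> []"
    by simp_all
  have "?u ! a \<noteq> ?v ! a"
    using assms(1) by (simp add: nth_append)
  then show "?u \<noteq> ?v"
    by metis
  fix f :: "nat \<Rightarrow> 'r"
  show "weval f ?u = weval f ?v"
    using assms(2)
    by (simp add: weval_replicate_word Ann_def act_diff act_mult act_varS_power act_varT_power)
qed

lemma ecomm_poly_in_Ann_imp_semigroup_identity:
  assumes "0 < CHAR('k)" and "1 \<le> m" and "varS ^ m * varT ^ m * (varT - varS) ^ m \<in> Ann"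
  shows "satisfies_semigroup_identity TYPE('r)"
proof -
  have prime: "prime CHAR('k)"
    using assms(1) by (rule prime_CHAR_semidom)
  define q where "q = CHAR('k) ^ m"
  have "m < 2 ^ m"
    by (rule less_exp)
  also have "\<dots> \<le> q"
    unfolding q_def using prime_ge_2_nat[OF prime] by (simp add: power_mono)
  finally have "m < q" .
  then have "varS ^ m * varT ^ m * (varT - varS) ^ m dvd
      (varS ^ q * varT ^ q * (varT - varS) ^ q :: 'k poly poly)"
    by (intro mult_dvd_mono le_imp_power_dvd) auto
  with assms(3) have "varS ^ q * varT ^ q * (varT - varS) ^ q \<in> Ann"
    by (rule Ann_dvd)
  moreover have "((varT - varS) + varS) ^ q = (varT - varS) ^ q + (varS :: 'k poly poly) ^ q"
    using prime by (intro freshmans_dream') (simp_all add: q_def)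
  then have "(varT - varS) ^ q = varT ^ q - (varS :: 'k poly poly) ^ q"
    by (simp add: algebra_simps)
  moreover have "varS ^ q * varT ^ q * (varT ^ q - varS ^ q) =
      varS ^ q * varT ^ (q + q) - varS ^ (q + q) * (varT ^ q :: 'k poly poly)"
    by (simp add: power_add algebra_simps)
  ultimately have "varS ^ q * varT ^ (q + q) - varS ^ (q + q) * varT ^ q \<in> Ann"
    by simp
  then show ?thesis
    using \<open>m < q\<close> by (intro swap_identity_imp_semigroup_identity[of q "q + q"]) auto
qed

end

context infinite_tf_algebra
begin

lemma binomial_identity_imp_lin_part_identity:
  assumes "u1 \<noteq> []" and "u2 \<noteq> []" and "\<forall>f. sc a1 (weval f u1) + sc a2 (weval f u2) = 0"
  shows "sc a1 (lin_part j 1 x y u1) + sc a2 (lin_part j 1 x y u2) = 0"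
proof -
  define N where "N = length u1 + length u2"
  define c where "c k = sc a1 (lin_part j k x y u1) + sc a2 (lin_part j k x y u2)" for k
  have extend: "(\<Sum>k\<le>N. sc (l ^ k) (lin_part j k x y u)) =
      (\<Sum>k\<le>length u. sc (l ^ k) (lin_part j k x y u))" if "length u \<le> N" for u l
    using that by (intro sum.mono_neutral_right) (auto simp: lin_part_eq_0)
  have "(\<Sum>k\<le>N. sc (l ^ k) (c k)) = 0" for l
  proof -
    have "(\<Sum>k\<le>N. sc (l ^ k) (c k)) =
        sc a1 (\<Sum>k\<le>N. sc (l ^ k) (lin_part j k x y u1)) +
        sc a2 (\<Sum>k\<le>N. sc (l ^ k) (lin_part j k x y u2))"
      by (simp add: c_def scale_sum_right sum.distrib scale_right_distrib mult.commute)
    also have "\<dots> = sc a1 (weval (\<lambda>i. if i = j then y + sc l x else y) u1) +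
        sc a2 (weval (\<lambda>i. if i = j then y + sc l x else y) u2)"
      using extend[of u1 l] extend[of u2 l] weval_subst_expand[OF assms(1), of j y l x]
        weval_subst_expand[OF assms(2), of j y l x] by (simp add: N_def)
    also have "\<dots> = 0"
      using assms(3) by blast
    finally show ?thesis .
  qed
  moreover have "1 \<le> N"
    using assms(1) by (simp add: N_def Suc_le_eq)
  ultimately have "c 1 = 0"
    by (intro coeff_eq_0_if_vanishes_on_infinite[OF infinite_scalars]) auto
  then show ?thesis
    by (simp add: c_def)
qed

lemma binomial_identity_imp_Ann_nonzero:
  assumes "satisfies_binomial_identity sc"
  shows "\<exists>B\<in>Ann. B \<noteq> 0"
proof -
  obtain a1 a2 u1 u2 where u: "u1 \<noteq> []" "u2 \<noteq> []"
    and nontrivial: "if u1 = u2 then a1 + a2 \<noteq> 0 else a1 \<noteq> 0 \<or> a2 \<noteq> 0"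
    and id: "\<forall>f :: nat \<Rightarrow> 'r. sc a1 (weval f u1) + sc a2 (weval f u2) = 0"
    using assms unfolding satisfies_binomial_identity_def by blast
  obtain j where "smult [:a1:] (word_poly j u1) + smult [:a2:] (word_poly j u2) \<noteq> 0"
    using word_poly_combination_nonzero[OF u nontrivial] by blast
  moreover have "smult [:a1:] (word_poly j u1) + smult [:a2:] (word_poly j u2) \<in> Ann"
    using binomial_identity_imp_lin_part_identity[OF u id]
    by (simp add: Ann_def act_add act_smult_const act_word_poly)
  ultimately show ?thesis
    by blast
qed

end

theorem theorem1p3:
  fixes sc :: "'k::idom \<Rightarrow> 'r::ring \<Rightarrow> 'r"
  assumes "infinite (UNIV :: 'k set)"
    and "CHAR('k) > 0"
    and "k_algebra sc"
    and "torsion_free_action sc"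
  defines "P1 \<equiv> satisfies_semigroup_identity TYPE('r)"
    and "P2 \<equiv> satisfies_binomial_identity sc"
    and "P3 \<equiv> (\<exists>(n::nat) (\<alpha>::nat \<Rightarrow> 'k). (\<exists>i\<le>n. \<alpha> i \<noteq> 0) \<and>
               (\<forall>x y :: 'r. (\<Sum>i\<le>n. sc (\<alpha> i) (lpow y i (rpow y (n - i) x))) = 0))"
    and "P4 \<equiv> (\<exists>m::nat. m \<ge> 1 \<and>
               (\<forall>x y :: 'r. lpow y m (rpow y m (ecomm x y m)) = 0))"
  shows "(P1 \<longleftrightarrow> P2) \<and> (P2 \<longleftrightarrow> P3) \<and> (P3 \<longleftrightarrow> P4)"
proof -
  interpret infinite_tf_algebra sc
    using assms(1,3,4) by unfold_locales auto
  have P3_iff: "P3 \<longleftrightarrow> (\<exists>n h. h \<noteq> 0 \<and> degree h \<le> n \<and> homog n h \<in> Ann)"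
    unfolding P3_def by (rule homogeneous_identity_iff)
  have P4_iff: "P4 \<longleftrightarrow> (\<exists>m\<ge>1. varS ^ m * varT ^ m * (varT - varS) ^ m \<in> Ann)"
    unfolding P4_def by (simp only: ecomm_identity_iff)
  have "P1 \<Longrightarrow> P2"
    unfolding P1_def P2_def by (rule semigroup_identity_imp_binomial_identity)
  moreover have "P2 \<Longrightarrow> P3"
    unfolding P2_def P3_iff
    using binomial_identity_imp_Ann_nonzero nonzero_in_Ann_imp_homog_in_Ann by blast
  moreover have "P3 \<Longrightarrow> P4"
    unfolding P3_iff P4_iff using homog_in_Ann_imp_ecomm_poly_in_Ann by blast
  moreover have "P4 \<Longrightarrow> P1"
    unfolding P4_iff P1_def using ecomm_poly_in_Ann_imp_semigroup_identity[OF assms(2)] by blast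
  ultimately show ?thesis
    by blast
qed

end
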